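(* Let $x\ge 2$ be real and let $2\le\lambda<3$. For a positive integer $n$ let $p_n$ denote the least prime factor of $n$, and for each prime $p\mid n$ define \[ w_p(n)=\begin{cases} 1-\dfrac{\log p}{\log x} & \text{if } p=p_n,\\[2mm] \dfrac{\log p_n}{\log x} & \text{if } p>p_n \text{ and } p<x^{1/2},\\[2mm] 1-\dfrac{\log p}{\log x} & \text{if } p>p_n \text{ and } p\ge x^{1/2},\end{cases} \] and \[ w(n)=1-\frac{1}{3-\lambda}\sum_{\substack{p\mid n\\ p<x}} w_p(n). \] If $n\le x^\lambda$ and $w(n)>0$, then $n$ has at most $2$ distinct prime factors.
   Context: All sums over $p$ run over primes. *)

theory Defs
  imports "HOL-Computational_Algebra.Primes" Complex_Main
begin

text \<open>Least prime factor p_n of a positive integer n (only used when n > 1).\<close>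
definition least_pf :: "nat \<Rightarrow> nat" where
  "least_pf n = Min (prime_factors n)"

definition wp :: "real \<Rightarrow> nat \<Rightarrow> nat \<Rightarrow> real" where
  "wp x n p =
     (if p = least_pf n then 1 - ln (real p) / ln x
      else if p > least_pf n \<and> real p < x powr (1/2) then ln (real (least_pf n)) / ln x
      else 1 - ln (real p) / ln x)"

definition wfun :: "real \<Rightarrow> real \<Rightarrow> nat \<Rightarrow> real" where
  "wfun x lam n = 1 - (1 / (3 - lam)) *
     (\<Sum>p\<in>{p \<in> prime_factors n. real p < x}. wp x n p)"

end

theory Submission
  imports Defs
begin

text \<open>
  Write \<open>L = log x\<close>, \<open>m\<close> for the least prime factor of \<open>n\<close>, and \<open>S\<close> for the sum of the weights
  \<open>w\<^sub>p(n)\<close> over the prime factors \<open>p < x\<close>, so that \<open>w(n) > 0\<close> says \<open>S < 3 - \<lambda>\<close>. All weights are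
  nonnegative. If some prime factor \<open>q \<noteq> m\<close> lies below \<open>x\<^sup>1\<^sup>/\<^sup>2\<close>, then already
  \<open>w\<^sub>m(n) + w\<^sub>q(n) = 1 \<ge> 3 - \<lambda>\<close>, impossible. Otherwise every prime factor \<open>p\<close> gets weight
  \<open>1 - log p / L\<close> when \<open>p < x\<close>, and \<open>1 - log p / L \<le> 0\<close> when \<open>p \<ge> x\<close>; summing over all prime
  factors gives \<open>\<omega>(n) \<le> S + log n / L < (3 - \<lambda>) + \<lambda> = 3\<close>.
\<close>

lemma prod_prime_factors_le:
  fixes n :: nat
  assumes "n > 0"
  shows "\<Prod>(prime_factors n) \<le> n"
proof -
  have "\<Prod>(prime_factors n) \<le> (\<Prod>p\<in>prime_factors n. p ^ multiplicity p n)"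
    by (intro prod_mono)
      (auto simp: prime_factors_multiplicity intro!: self_le_power prime_ge_1_nat)
  also have "\<dots> = n"
    using assms by (simp add: prod_prime_factors)
  finally show ?thesis .
qed

lemma sum_ln_prime_factors_le:
  fixes n :: nat
  assumes "n > 0"
  shows "(\<Sum>p\<in>prime_factors n. ln (real p)) \<le> ln (real n)"
proof -
  have "(\<Sum>p\<in>prime_factors n. ln (real p)) = ln (real (\<Prod>(prime_factors n)))"
    unfolding of_nat_prod
    by (subst ln_prod) (auto dest: prime_factors_gt_0_nat)
  also have "\<dots> \<le> ln (real n)"
  proof (rule ln_mono)
    show "real (\<Prod>(prime_factors n)) \<le> real n"
      using prod_prime_factors_le[OF assms] by (simp only: of_nat_le_iff)
    show "0 < real (\<Prod>(prime_factors n))"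
      by (auto intro!: prod_pos prime_factors_gt_0_nat)
  qed
  finally show ?thesis .
qed

lemma least_pf_in_prime_factors:
  assumes "p \<in> prime_factors n"
  shows "least_pf n \<in> prime_factors n"
  using assms unfolding least_pf_def by (intro Min_in) auto

lemma least_pf_le:
  assumes "p \<in> prime_factors n"
  shows "least_pf n \<le> p"
  using assms unfolding least_pf_def by (intro Min_le) auto

definition wsum :: "real \<Rightarrow> nat \<Rightarrow> real" where
  "wsum x n = (\<Sum>p\<in>{p \<in> prime_factors n. real p < x}. wp x n p)"

lemma wfun_pos_iff:
  assumes "lam < 3"
  shows "wfun x lam n > 0 \<longleftrightarrow> wsum x n < 3 - lam"
  using assms unfolding wfun_def wsum_def by (simp add: field_simps)

lemma wp_nonneg:
  assumes "x > 1" and "p \<in> prime_factors n" and "real p < x"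
  shows "wp x n p \<ge> 0"
proof -
  have "least_pf n \<ge> 1"
    using least_pf_in_prime_factors[OF assms(2)] in_prime_factors_imp_prime prime_ge_1_nat
    by blast
  moreover have "ln (real p) \<le> ln x"
    using assms(3) prime_factors_gt_0_nat[OF assms(2)] by simp
  ultimately show ?thesis
    using assms(1) unfolding wp_def by auto
qed

lemma wp_least_pf_add_small_factor:
  assumes "x > 1" and "q \<in> prime_factors n" and "q \<noteq> least_pf n"
    and "real q < x powr (1/2)"
  shows "wp x n (least_pf n) + wp x n q = 1"
proof -
  have "least_pf n < q"
    using least_pf_le[OF assms(2)] assms(3) by simp
  then show ?thesis
    using assms by (simp add: wp_def field_simps)
qed

lemma wsum_ge_one_if_small_factor:
  assumes "x > 1" and "q \<in> prime_factors n" and "q \<noteq> least_pf n"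
    and "real q < x powr (1/2)"
  shows "wsum x n \<ge> 1"
proof -
  let ?m = "least_pf n"
  have "x powr (1/2) \<le> x"
    using assms(1) powr_mono[of "1/2" 1 x] by simp
  with assms(4) have "real q < x" by simp
  moreover have "?m < q"
    using least_pf_le[OF assms(2)] assms(3) by simp
  ultimately have "{?m, q} \<subseteq> {p \<in> prime_factors n. real p < x}"
    using least_pf_in_prime_factors[OF assms(2)] assms(2) by auto
  then have "(\<Sum>p\<in>{?m, q}. wp x n p) \<le> wsum x n"
    unfolding wsum_def using wp_nonneg[OF assms(1)] by (intro sum_mono2) auto
  moreover have "(\<Sum>p\<in>{?m, q}. wp x n p) = 1"
    using wp_least_pf_add_small_factor[OF assms] assms(3) by simp
  ultimately show ?thesis by simp
qed

lemma card_prime_factors_le_if_no_small_factor: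
  assumes "x > 1" and "n > 0"
    and no_small: "\<And>q. q \<in> prime_factors n \<Longrightarrow> q \<noteq> least_pf n \<Longrightarrow> x powr (1/2) \<le> real q"
  shows "real (card (prime_factors n)) \<le> wsum x n + ln (real n) / ln x"
proof -
  define g where "g p = (if real p < x then wp x n p else 0) + ln (real p) / ln x" for p
  have "1 \<le> g p" if p: "p \<in> prime_factors n" for p
  proof (cases "real p < x")
    case True
    have "p = least_pf n \<or> \<not> real p < x powr (1/2)"
      using no_small[OF p] by auto
    then have "wp x n p = 1 - ln (real p) / ln x"
      unfolding wp_def by auto
    with True show ?thesis unfolding g_def by simp
  next
    case False
    then have "ln x \<le> ln (real p)"
      using assms(1) by simp
    with False assms(1) show ?thesis unfolding g_def by simp
  qed
  then have "real (card (prime_factors n)) \<le> (\<Sum>p\<in>prime_factors n. g p)"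
    using sum_mono[of "prime_factors n" "\<lambda>_. 1::real" g] by simp
  also have "\<dots> = wsum x n + (\<Sum>p\<in>prime_factors n. ln (real p)) / ln x"
    unfolding g_def wsum_def sum.distrib sum_divide_distrib
    by (simp add: sum.inter_filter)
  also have "\<dots> \<le> wsum x n + ln (real n) / ln x"
    using sum_ln_prime_factors_le[OF assms(2)] assms(1) by (simp add: divide_right_mono)
  finally show ?thesis .
qed

theorem lemma1:
  fixes x lam :: real and n :: nat
  assumes "x \<ge> 2" and "2 \<le> lam" and "lam < 3"
    and "n > 0"
    and "real n \<le> x powr lam"
    and "wfun x lam n > 0"
  shows "card (prime_factors n) \<le> 2"
proof -
  have x: "x > 1" using assms(1) by simp
  have wsum: "wsum x n < 3 - lam"
    using assms(3,6) wfun_pos_iff by blast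
  then have no_small: "x powr (1/2) \<le> real q"
    if "q \<in> prime_factors n" "q \<noteq> least_pf n" for q
    using wsum_ge_one_if_small_factor[OF x that] assms(2) by force
  have "ln (real n) \<le> lam * ln x"
    using assms(1,4,5) by (simp add: ln_powr flip: ln_le_cancel_iff)
  then have "ln (real n) / ln x \<le> lam"
    using x by (simp add: divide_le_eq)
  with card_prime_factors_le_if_no_small_factor[OF x assms(4) no_small] wsum
  have "real (card (prime_factors n)) < 3" by linarith
  then show ?thesis by simp
qed

end
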